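(* Let $\alpha>0$ and let $\mu$ be a positive Borel measure on $\mathbb{C}$ satisfying condition (M). Then the Toeplitz operator $T_\mu$ is bounded on $F^\infty_\alpha$ if and only if $\tilde{\mu}_1\in L^\infty(\mathbb{C},dA)$.
   Context: $F^\infty_\alpha$ is the space of entire functions $f$ with $\|f\|_{\infty,\alpha}=\sup_{z}|f(z)|e^{-\alpha|z|^2/2}<\infty$. $K_z(w)=e^{\alpha\bar z w}$. $\mu$ satisfies condition (M) if $\int_{\mathbb{C}}|K_z(w)|^2e^{-\alpha|w|^2}\,d\mu(w)<\infty$ for all $z\in\mathbb{C}$. The Toeplitz operator on $F^\infty_\alpha$ is $T_\mu f(z)=\int_{\mathbb{C}}f(w)\overline{K_z(w)}e^{-\alpha|w|^2}\,d\mu(w)$. For $t>0$, $\tilde{\mu}_t(z)=\frac{\alpha}{\pi}\int_{\mathbb{C}}e^{-\alpha t|z-w|^2/2}\,d\mu(w)$; $dA$ is area measure. *)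

theory Defs
  imports "HOL-Analysis.Analysis"
begin

definition fock_kernel :: "real \<Rightarrow> complex \<Rightarrow> complex \<Rightarrow> complex" where
  "fock_kernel \<alpha> z w = exp (complex_of_real \<alpha> * cnj z * w)"

definition fock_inf_norm :: "real \<Rightarrow> (complex \<Rightarrow> complex) \<Rightarrow> real" where
  "fock_inf_norm \<alpha> f = (SUP z. norm (f z) * exp (- \<alpha> * (norm z)\<^sup>2 / 2))"

definition fock_inf :: "real \<Rightarrow> (complex \<Rightarrow> complex) set" where
  "fock_inf \<alpha> = {f. f holomorphic_on UNIV \<and>
      (\<exists>M. \<forall>z. norm (f z) * exp (- \<alpha> * (norm z)\<^sup>2 / 2) \<le> M)}"

definition condition_M :: "real \<Rightarrow> complex measure \<Rightarrow> bool" where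
  "condition_M \<alpha> \<mu> \<longleftrightarrow> (\<forall>z. (\<integral>\<^sup>+ w. ennreal ((norm (fock_kernel \<alpha> z w))\<^sup>2
        * exp (- \<alpha> * (norm w)\<^sup>2)) \<partial>\<mu>) < \<infinity>)"

definition toeplitz_integrand :: "real \<Rightarrow> (complex \<Rightarrow> complex) \<Rightarrow> complex \<Rightarrow> complex \<Rightarrow> complex" where
  "toeplitz_integrand \<alpha> f z w =
     f w * cnj (fock_kernel \<alpha> z w) * complex_of_real (exp (- \<alpha> * (norm w)\<^sup>2))"

definition toeplitz :: "real \<Rightarrow> complex measure \<Rightarrow> (complex \<Rightarrow> complex) \<Rightarrow> complex \<Rightarrow> complex" where
  "toeplitz \<alpha> \<mu> f z = (\<integral> w. toeplitz_integrand \<alpha> f z w \<partial>\<mu>)"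

definition toeplitz_bounded_fock_inf :: "real \<Rightarrow> complex measure \<Rightarrow> bool" where
  "toeplitz_bounded_fock_inf \<alpha> \<mu> \<longleftrightarrow>
     (\<exists>C. \<forall>f \<in> fock_inf \<alpha>.
        (\<forall>z. integrable \<mu> (toeplitz_integrand \<alpha> f z)) \<and>
        toeplitz \<alpha> \<mu> f \<in> fock_inf \<alpha> \<and>
        fock_inf_norm \<alpha> (toeplitz \<alpha> \<mu> f) \<le> C * fock_inf_norm \<alpha> f)"

definition mu_tilde :: "real \<Rightarrow> real \<Rightarrow> complex measure \<Rightarrow> complex \<Rightarrow> ennreal" where
  "mu_tilde \<alpha> t \<mu> z = ennreal (\<alpha> / pi) *
      (\<integral>\<^sup>+ w. ennreal (exp (- \<alpha> * t * (norm (z - w))\<^sup>2 / 2)) \<partial>\<mu>)"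

definition in_Linf_dA :: "(complex \<Rightarrow> ennreal) \<Rightarrow> bool" where
  "in_Linf_dA g \<longleftrightarrow> g \<in> borel_measurable lebesgue \<and>
      (\<exists>C::real. AE z in lebesgue. g z \<le> ennreal C)"

end

theory Submission
  imports Defs "HOL-Probability.Distributions"
begin

(*
  Necessity: the normalized kernels k_p = K_p exp(-alpha |p|^2/2) have norm at most 1, and
  (T_mu k_p)(p) = exp(alpha |p|^2/2) * int exp(-alpha |p - w|^2) dmu(w). Boundedness of T_mu
  therefore bounds these Gaussian integrals uniformly in p; integrating the bound against
  exp(-alpha |z - p|^2) dA(p) and using Fubini turns them into the wider Gaussian
  exp(-alpha |z - w|^2/2), i.e. into a uniform bound on tilde mu_1.

  Sufficiency: tilde mu_1 is lower semicontinuous by Fatou's lemma, so an a.e. bound holds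
  everywhere (the exceptional set is open and null). The integrand of T_mu f is dominated by
  ||f|| exp(alpha |z|^2/2) exp(-alpha |z - w|^2/2), which gives the norm estimate. Holomorphy
  follows by differentiating under the integral sign; the needed integrability of
  exp(beta |w|) exp(-alpha |z - w|^2/2) holds because exp(beta |v|) exp(-alpha |v|^2/2) is
  dominated by a multiple of the sum of four translates of exp(-alpha |v|^2/2).
*)

lemma norm_fock_kernel: "norm (fock_kernel \<alpha> z w) = exp (\<alpha> * (z \<bullet> w))"
  by (simp add: fock_kernel_def inner_complex_def algebra_simps)

lemma exp_gauss_expand:
  "exp (- \<alpha> * (cmod (z - w))\<^sup>2 / 2) =
     exp (- \<alpha> * (cmod z)\<^sup>2 / 2) * exp (\<alpha> * (z \<bullet> w)) * exp (- \<alpha> * (cmod w)\<^sup>2 / 2)"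
  unfolding dot_norm_neg[of z w] by (simp add: field_simps flip: exp_add)

lemma weighted_norm_bound_nonneg:
  "norm (f w) * exp (- \<alpha> * (cmod w)\<^sup>2 / 2) \<le> N \<Longrightarrow> 0 \<le> N"
  by (erule order_trans[rotated]) simp

lemma norm_toeplitz_integrand_le:
  assumes "norm (f w) * exp (- \<alpha> * (cmod w)\<^sup>2 / 2) \<le> N"
  shows "norm (toeplitz_integrand \<alpha> f z w)
           \<le> N * exp (\<alpha> * (cmod z)\<^sup>2 / 2) * exp (- \<alpha> * (cmod (z - w))\<^sup>2 / 2)"
proof -
  have "norm (f w) \<le> N * exp (\<alpha> * (cmod w)\<^sup>2 / 2)"
    using assms by (simp add: exp_minus field_simps)
  then have "norm (toeplitz_integrand \<alpha> f z w)
      \<le> N * exp (\<alpha> * (cmod w)\<^sup>2 / 2) * exp (\<alpha> * (z \<bullet> w)) * exp (- \<alpha> * (cmod w)\<^sup>2)"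
    by (simp add: toeplitz_integrand_def norm_mult norm_fock_kernel)
  also have "\<dots> = N * exp (\<alpha> * (cmod z)\<^sup>2 / 2) * exp (- \<alpha> * (cmod (z - w))\<^sup>2 / 2)"
    unfolding exp_gauss_expand by (simp add: mult.assoc flip: exp_add)
  finally show ?thesis .
qed

lemma norm_le_fock_inf_norm:
  "f \<in> fock_inf \<alpha> \<Longrightarrow> norm (f z) * exp (- \<alpha> * (norm z)\<^sup>2 / 2) \<le> fock_inf_norm \<alpha> f"
  unfolding fock_inf_norm_def fock_inf_def by (rule cSUP_upper) (auto intro: bdd_aboveI2)

lemma fock_inf_norm_le:
  "(\<And>z. norm (f z) * exp (- \<alpha> * (norm z)\<^sup>2 / 2) \<le> B) \<Longrightarrow> fock_inf_norm \<alpha> f \<le> B"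
  unfolding fock_inf_norm_def by (rule cSUP_least) auto

lemma fock_inf_norm_nonneg: "f \<in> fock_inf \<alpha> \<Longrightarrow> 0 \<le> fock_inf_norm \<alpha> f"
  by (rule order_trans[OF _ norm_le_fock_inf_norm[of f \<alpha> 0]]) auto

section \<open>Testing on normalized kernels\<close>

definition normalized_fock_kernel :: "real \<Rightarrow> complex \<Rightarrow> complex \<Rightarrow> complex" where
  "normalized_fock_kernel \<alpha> a w = fock_kernel \<alpha> a w * of_real (exp (- \<alpha> * (cmod a)\<^sup>2 / 2))"

lemma norm_normalized_fock_kernel:
  "norm (normalized_fock_kernel \<alpha> a w) * exp (- \<alpha> * (cmod w)\<^sup>2 / 2) = exp (- \<alpha> * (cmod (a - w))\<^sup>2 / 2)"
  unfolding normalized_fock_kernel_def exp_gauss_expand[of \<alpha> a w]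
  by (simp add: norm_mult norm_fock_kernel mult_ac)

lemma normalized_fock_kernel_in_fock_inf:
  assumes "\<alpha> \<ge> 0"
  shows "normalized_fock_kernel \<alpha> a \<in> fock_inf \<alpha>"
  unfolding fock_inf_def mem_Collect_eq
proof
  show "normalized_fock_kernel \<alpha> a holomorphic_on UNIV"
    unfolding normalized_fock_kernel_def fock_kernel_def by (intro holomorphic_intros)
  show "\<exists>M. \<forall>z. norm (normalized_fock_kernel \<alpha> a z) * exp (- \<alpha> * (norm z)\<^sup>2 / 2) \<le> M"
    using assms norm_normalized_fock_kernel[of \<alpha> a] by (intro exI[of _ 1]) simp
qed

lemma fock_inf_norm_normalized_fock_kernel:
  "\<alpha> \<ge> 0 \<Longrightarrow> fock_inf_norm \<alpha> (normalized_fock_kernel \<alpha> a) \<le> 1"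
  using norm_normalized_fock_kernel[of \<alpha> a] by (intro fock_inf_norm_le) simp

lemma toeplitz_integrand_normalized_fock_kernel:
  "toeplitz_integrand \<alpha> (normalized_fock_kernel \<alpha> a) a w =
     of_real (exp (\<alpha> * (cmod a)\<^sup>2 / 2) * exp (- \<alpha> * (cmod (a - w))\<^sup>2))"
proof -
  have "toeplitz_integrand \<alpha> (normalized_fock_kernel \<alpha> a) a w =
      fock_kernel \<alpha> a w * cnj (fock_kernel \<alpha> a w) *
      of_real (exp (- \<alpha> * (cmod a)\<^sup>2 / 2) * exp (- \<alpha> * (cmod w)\<^sup>2))"
    unfolding toeplitz_integrand_def normalized_fock_kernel_def of_real_mult by (simp only: mult_ac)
  also have "fock_kernel \<alpha> a w * cnj (fock_kernel \<alpha> a w) = of_real ((exp (\<alpha> * (a \<bullet> w)))\<^sup>2)"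
    by (simp only: complex_norm_square[symmetric] norm_fock_kernel)
  also have "of_real ((exp (\<alpha> * (a \<bullet> w)))\<^sup>2) * of_real (exp (- \<alpha> * (cmod a)\<^sup>2 / 2) * exp (- \<alpha> * (cmod w)\<^sup>2))
      = (of_real (exp (\<alpha> * (cmod a)\<^sup>2 / 2) * exp (- \<alpha> * (cmod (a - w))\<^sup>2)) :: complex)"
    unfolding of_real_mult[symmetric] dot_norm_neg[of a w]
    by (simp add: power2_eq_square field_simps flip: exp_add)
  finally show ?thesis .
qed

lemma toeplitz_bounded_imp_gauss_integral_bounded:
  fixes \<mu> :: "complex measure"
  assumes "\<alpha> \<ge> 0" and "toeplitz_bounded_fock_inf \<alpha> \<mu>"
  obtains K where "K \<ge> 0" "\<And>p. (\<integral>\<^sup>+ w. ennreal (exp (- \<alpha> * (cmod (p - w))\<^sup>2)) \<partial>\<mu>) \<le> ennreal K"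
proof -
  obtain C where C: "\<And>f. f \<in> fock_inf \<alpha> \<Longrightarrow> (\<forall>z. integrable \<mu> (toeplitz_integrand \<alpha> f z)) \<and>
      toeplitz \<alpha> \<mu> f \<in> fock_inf \<alpha> \<and> fock_inf_norm \<alpha> (toeplitz \<alpha> \<mu> f) \<le> C * fock_inf_norm \<alpha> f"
    using assms(2) unfolding toeplitz_bounded_fock_inf_def by blast
  have "(\<integral>\<^sup>+ w. ennreal (exp (- \<alpha> * (cmod (p - w))\<^sup>2)) \<partial>\<mu>) \<le> ennreal \<bar>C\<bar>" for p
  proof -
    define k where "k = normalized_fock_kernel \<alpha> p"
    define c where "c = exp (\<alpha> * (cmod p)\<^sup>2 / 2)"
    define \<phi> where "\<phi> w = exp (- \<alpha> * (cmod (p - w))\<^sup>2)" for w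
    have k: "k \<in> fock_inf \<alpha>"
      unfolding k_def by (rule normalized_fock_kernel_in_fock_inf[OF assms(1)])
    have integrand: "toeplitz_integrand \<alpha> k p = (\<lambda>w. of_real (c * \<phi> w))"
      by (simp add: fun_eq_iff k_def c_def \<phi>_def toeplitz_integrand_normalized_fock_kernel)
    have "integrable \<mu> (\<lambda>w. of_real (c * \<phi> w) :: complex)"
      using C[OF k] integrand by metis
    then have "integrable \<mu> (\<lambda>w. c * \<phi> w)"
      by (rule iffD1[OF complex_of_real_integrable_eq])
    then have int_\<phi>: "integrable \<mu> \<phi>" by (simp add: c_def)
    have "integral\<^sup>L \<mu> \<phi> \<ge> 0"
      by (rule integral_nonneg_AE) (simp add: \<phi>_def)
    then have "norm (toeplitz \<alpha> \<mu> k p) = c * integral\<^sup>L \<mu> \<phi>"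
      unfolding toeplitz_def integrand by (simp add: c_def norm_mult)
    then have "integral\<^sup>L \<mu> \<phi> = norm (toeplitz \<alpha> \<mu> k p) * exp (- \<alpha> * (norm p)\<^sup>2 / 2)"
      by (simp add: c_def mult.assoc flip: exp_add)
    also have "\<dots> \<le> fock_inf_norm \<alpha> (toeplitz \<alpha> \<mu> k)"
      using C[OF k] by (intro norm_le_fock_inf_norm) blast
    also have "\<dots> \<le> C * fock_inf_norm \<alpha> k"
      using C[OF k] by blast
    also have "\<dots> \<le> \<bar>C\<bar> * 1"
      using fock_inf_norm_nonneg[OF k] fock_inf_norm_normalized_fock_kernel[OF assms(1)]
      unfolding k_def by (intro mult_mono) auto
    finally have "integral\<^sup>L \<mu> \<phi> \<le> \<bar>C\<bar>" by simp
    moreover have "(\<integral>\<^sup>+ w. ennreal (\<phi> w) \<partial>\<mu>) = ennreal (integral\<^sup>L \<mu> \<phi>)"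
      by (rule nn_integral_eq_integral[OF int_\<phi>]) (simp add: \<phi>_def)
    ultimately show ?thesis unfolding \<phi>_def by (simp add: ennreal_leI)
  qed
  then show ?thesis by (intro that[of "\<bar>C\<bar>"]) auto
qed

section \<open>Gaussian integrals and the averaging function\<close>

lemma nn_integral_exp_neg_square:
  assumes "c > 0"
  shows "(\<integral>\<^sup>+ t. ennreal (exp (- c * t\<^sup>2)) \<partial>lborel) = ennreal (sqrt (pi / c))"
proof -
  define \<sigma> where "\<sigma> = sqrt (1 / (2 * c))"
  have "\<sigma> > 0" using assms by (simp add: \<sigma>_def)
  have "\<sigma>\<^sup>2 = 1 / (2 * c)" using assms by (simp add: \<sigma>_def)
  then have "exp (- c * t\<^sup>2) = sqrt (pi / c) * normal_density 0 \<sigma> t" for t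
    using assms by (simp add: normal_density_def)
  then have "(\<integral>\<^sup>+ t. ennreal (exp (- c * t\<^sup>2)) \<partial>lborel)
      = ennreal (sqrt (pi / c)) * (\<integral>\<^sup>+ t. ennreal (normal_density 0 \<sigma> t) \<partial>lborel)"
    using assms by (subst nn_integral_cmult[symmetric]) (simp_all add: ennreal_mult)
  also have "(\<integral>\<^sup>+ t. ennreal (normal_density 0 \<sigma> t) \<partial>lborel) = 1"
    using \<open>\<sigma> > 0\<close> by (subst nn_integral_eq_integral) auto
  finally show ?thesis by simp
qed

lemma nn_integral_gaussian_complex:
  assumes "c > 0"
  shows "(\<integral>\<^sup>+ a. ennreal (exp (- c * (cmod (a - m))\<^sup>2)) \<partial>(lborel :: complex measure)) = ennreal (pi / c)"
proof -
  have product: "ennreal (exp (- c * (cmod a)\<^sup>2)) = (\<Prod>b\<in>Basis. ennreal (exp (- c * (a \<bullet> b)\<^sup>2)))"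
    for a :: complex
  proof -
    have "exp (- c * (cmod a)\<^sup>2) = exp (- c * (Re a)\<^sup>2) * exp (- c * (Im a)\<^sup>2)"
      by (simp add: cmod_power2 algebra_simps flip: exp_add)
    then show ?thesis by (simp add: Basis_complex_def inner_complex_def ennreal_mult)
  qed
  have "(\<integral>\<^sup>+ a. ennreal (exp (- c * (cmod (a - m))\<^sup>2)) \<partial>(lborel :: complex measure))
      = (\<integral>\<^sup>+ a. ennreal (exp (- c * (cmod a)\<^sup>2)) \<partial>lborel)"
  proof -
    have "(\<integral>\<^sup>+ a. ennreal (exp (- c * (cmod (a - m))\<^sup>2)) \<partial>(lborel :: complex measure))
        = (\<integral>\<^sup>+ a. ennreal (exp (- c * (cmod (a - m))\<^sup>2)) \<partial>distr lborel borel ((+) m))"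
      by (simp only: lborel_distr_plus)
    also have "\<dots> = (\<integral>\<^sup>+ a. ennreal (exp (- c * (cmod (m + a - m))\<^sup>2)) \<partial>lborel)"
      by (rule nn_integral_distr) auto
    finally show ?thesis by simp
  qed
  also have "\<dots> = (\<Prod>b\<in>(Basis :: complex set). \<integral>\<^sup>+ t. ennreal (exp (- c * t\<^sup>2)) \<partial>lborel)"
    unfolding product by (rule nn_integral_lborel_prod) auto
  also have "\<dots> = ennreal (pi / c)"
    using assms nn_integral_exp_neg_square[OF assms] by (simp add: Basis_complex_def flip: ennreal_mult)
  finally show ?thesis .
qed

lemma gauss_product_eq:
  "exp (- \<alpha> * (cmod (a - w))\<^sup>2) * exp (- \<alpha> * (cmod (z - a))\<^sup>2) =
     exp (- \<alpha> * (cmod (z - w))\<^sup>2 / 2) * exp (- (2 * \<alpha>) * (cmod (a - (z + w) / 2))\<^sup>2)"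
  unfolding cmod_power2 by (simp add: power2_eq_square field_simps flip: exp_add)

lemma nn_integral_gauss_product:
  assumes "\<alpha> > 0"
  shows "(\<integral>\<^sup>+ a. ennreal (exp (- \<alpha> * (cmod (a - w))\<^sup>2) * exp (- \<alpha> * (cmod (z - a))\<^sup>2)) \<partial>lborel)
           = ennreal (pi / (2 * \<alpha>)) * ennreal (exp (- \<alpha> * (cmod (z - w))\<^sup>2 / 2))"
proof -
  have "(\<integral>\<^sup>+ a. ennreal (exp (- \<alpha> * (cmod (a - w))\<^sup>2) * exp (- \<alpha> * (cmod (z - a))\<^sup>2)) \<partial>lborel)
      = ennreal (exp (- \<alpha> * (cmod (z - w))\<^sup>2 / 2)) *
        (\<integral>\<^sup>+ a. ennreal (exp (- (2 * \<alpha>) * (cmod (a - (z + w) / 2))\<^sup>2)) \<partial>lborel)"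
    unfolding gauss_product_eq by (simp add: ennreal_mult nn_integral_cmult)
  also have "\<dots> = ennreal (exp (- \<alpha> * (cmod (z - w))\<^sup>2 / 2)) * ennreal (pi / (2 * \<alpha>))"
    using assms by (simp only: nn_integral_gaussian_complex)
  finally show ?thesis by (simp only: mult.commute)
qed

lemma sigma_finite_if_gauss_integrable:
  fixes \<mu> :: "complex measure"
  assumes "sets \<mu> = sets borel" and "\<alpha> \<ge> 0"
    and finite: "(\<integral>\<^sup>+ w. ennreal (exp (- \<alpha> * (cmod w)\<^sup>2)) \<partial>\<mu>) < \<infinity>"
  shows "sigma_finite_measure \<mu>"
proof
  have "emeasure \<mu> (cball 0 (real n)) < \<infinity>" for n
  proof -
    have "emeasure \<mu> (cball 0 (real n)) = (\<integral>\<^sup>+ w. indicator (cball 0 (real n)) w \<partial>\<mu>)"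
      using assms(1) by simp
    also have "\<dots> \<le> (\<integral>\<^sup>+ w. ennreal (exp (\<alpha> * (real n)\<^sup>2)) * ennreal (exp (- \<alpha> * (cmod w)\<^sup>2)) \<partial>\<mu>)"
    proof (intro nn_integral_mono)
      fix w
      have "cmod w \<le> real n \<Longrightarrow> 1 \<le> exp (\<alpha> * (real n)\<^sup>2) * exp (- \<alpha> * (cmod w)\<^sup>2)"
        using assms(2) by (simp add: power_mono mult_left_mono flip: exp_add)
      then show "indicator (cball 0 (real n)) w
          \<le> ennreal (exp (\<alpha> * (real n)\<^sup>2)) * ennreal (exp (- \<alpha> * (cmod w)\<^sup>2))"
        by (simp add: indicator_def flip: ennreal_mult)
    qed
    also have "\<dots> = ennreal (exp (\<alpha> * (real n)\<^sup>2)) * (\<integral>\<^sup>+ w. ennreal (exp (- \<alpha> * (cmod w)\<^sup>2)) \<partial>\<mu>)"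
      by (rule nn_integral_cmult) (simp add: measurable_cong_sets[OF assms(1) refl])
    also have "\<dots> < \<infinity>" using finite by (simp add: ennreal_mult_less_top)
    finally show ?thesis .
  qed
  moreover have "(\<Union>n. cball 0 (real n)) = (UNIV :: complex set)"
    by (auto intro: real_arch_simple)
  ultimately show "\<exists>A::complex set set. countable A \<and> A \<subseteq> sets \<mu> \<and> \<Union> A = space \<mu> \<and> (\<forall>a\<in>A. emeasure \<mu> a \<noteq> \<infinity>)"
    using assms(1) sets_eq_imp_space_eq[OF assms(1)]
    by (intro exI[of _ "range (\<lambda>n::nat. cball 0 (real n))"]) (auto simp: less_top)
qed

lemma gauss_integral_half_le:
  fixes \<mu> :: "complex measure"
  assumes "\<alpha> > 0" and sets: "sets \<mu> = sets borel" and "sigma_finite_measure \<mu>" and "K \<ge> 0"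
    and bound: "\<And>p. (\<integral>\<^sup>+ w. ennreal (exp (- \<alpha> * (cmod (p - w))\<^sup>2)) \<partial>\<mu>) \<le> ennreal K"
  shows "(\<integral>\<^sup>+ w. ennreal (exp (- \<alpha> * (cmod (z - w))\<^sup>2 / 2)) \<partial>\<mu>) \<le> ennreal (2 * K)"
proof -
  interpret pair_sigma_finite lborel \<mu>
    using assms(3) by (simp add: pair_sigma_finite_def lborel.sigma_finite_measure_axioms)
  define F where "F a w = ennreal (exp (- \<alpha> * (cmod (a - w))\<^sup>2) * exp (- \<alpha> * (cmod (z - a))\<^sup>2))"
    for a w :: complex
  have "case_prod F \<in> borel_measurable (lborel \<Otimes>\<^sub>M \<mu>)"
    unfolding measurable_cong_sets[OF sets_pair_measure_cong[OF sets_lborel sets] refl] F_def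
    by measurable
  have "ennreal (pi / (2 * \<alpha>)) * (\<integral>\<^sup>+ w. ennreal (exp (- \<alpha> * (cmod (z - w))\<^sup>2 / 2)) \<partial>\<mu>)
      = (\<integral>\<^sup>+ w. (\<integral>\<^sup>+ a. F a w \<partial>lborel) \<partial>\<mu>)"
    unfolding F_def nn_integral_gauss_product[OF assms(1)]
    by (rule nn_integral_cmult[symmetric]) (simp add: measurable_cong_sets[OF sets refl])
  also have "\<dots> = (\<integral>\<^sup>+ a. (\<integral>\<^sup>+ w. F a w \<partial>\<mu>) \<partial>lborel)"
    by (rule Fubini') fact
  also have "\<dots> \<le> (\<integral>\<^sup>+ a. ennreal (exp (- \<alpha> * (cmod (a - z))\<^sup>2)) * ennreal K \<partial>lborel)"
  proof (intro nn_integral_mono)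
    fix a
    have "(\<integral>\<^sup>+ w. F a w \<partial>\<mu>)
        = ennreal (exp (- \<alpha> * (cmod (a - z))\<^sup>2)) * (\<integral>\<^sup>+ w. ennreal (exp (- \<alpha> * (cmod (a - w))\<^sup>2)) \<partial>\<mu>)"
      unfolding F_def
      by (subst nn_integral_cmult[symmetric])
        (simp_all add: measurable_cong_sets[OF sets refl] ennreal_mult norm_minus_commute mult.commute)
    also have "\<dots> \<le> ennreal (exp (- \<alpha> * (cmod (a - z))\<^sup>2)) * ennreal K"
      by (intro mult_left_mono bound) simp
    finally show "(\<integral>\<^sup>+ w. F a w \<partial>\<mu>) \<le> ennreal (exp (- \<alpha> * (cmod (a - z))\<^sup>2)) * ennreal K" .
  qed
  also have "\<dots> = ennreal (pi / \<alpha>) * ennreal K"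
    using nn_integral_gaussian_complex[OF assms(1), of z] by (simp add: nn_integral_multc)
  also have "\<dots> = ennreal (pi / (2 * \<alpha>)) * ennreal (2 * K)"
    using assms(1,4) by (subst (1 2) ennreal_mult[symmetric]) (auto simp: field_simps)
  finally show ?thesis
    using assms(1) by (subst (asm) ennreal_mult_le_mult_iff) auto
qed

lemma mu_tilde_measurable:
  fixes \<mu> :: "complex measure"
  assumes sets: "sets \<mu> = sets borel" and "sigma_finite_measure \<mu>"
  shows "mu_tilde \<alpha> t \<mu> \<in> borel_measurable lebesgue"
proof -
  interpret sigma_finite_measure \<mu> by fact
  have "(\<lambda>(z, w). ennreal (exp (- \<alpha> * t * (cmod (z - w))\<^sup>2 / 2))) \<in> borel_measurable (lborel \<Otimes>\<^sub>M \<mu>)"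
    unfolding measurable_cong_sets[OF sets_pair_measure_cong[OF sets_lborel sets] refl]
    by measurable
  then have "(\<lambda>z. \<integral>\<^sup>+ w. ennreal (exp (- \<alpha> * t * (cmod (z - w))\<^sup>2 / 2)) \<partial>\<mu>) \<in> borel_measurable lborel"
    by (rule borel_measurable_nn_integral)
  then have "mu_tilde \<alpha> t \<mu> \<in> borel_measurable lborel"
    unfolding mu_tilde_def[abs_def] by measurable
  then show ?thesis by (rule measurable_completion)
qed

lemma toeplitz_bounded_imp_mu_tilde_Linf:
  fixes \<mu> :: "complex measure"
  assumes "\<alpha> > 0" and sets: "sets \<mu> = sets borel" and "condition_M \<alpha> \<mu>"
    and "toeplitz_bounded_fock_inf \<alpha> \<mu>"
  shows "in_Linf_dA (mu_tilde \<alpha> 1 \<mu>)"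
proof -
  \<comment> \<open>Condition (M) is only needed for sigma-finiteness of \<open>\<mu>\<close>, which Fubini and the
    measurability of \<open>mu_tilde\<close> require.\<close>
  have "(\<integral>\<^sup>+ w. ennreal (exp (- \<alpha> * (cmod w)\<^sup>2)) \<partial>\<mu>) < \<infinity>"
    using assms(3) unfolding condition_M_def by (auto simp: fock_kernel_def elim: allE[of _ 0])
  then have \<sigma>: "sigma_finite_measure \<mu>"
    using assms(1) by (intro sigma_finite_if_gauss_integrable[OF sets]) auto
  obtain K where "K \<ge> 0" and K: "\<And>p. (\<integral>\<^sup>+ w. ennreal (exp (- \<alpha> * (cmod (p - w))\<^sup>2)) \<partial>\<mu>) \<le> ennreal K"
    using toeplitz_bounded_imp_gauss_integral_bounded assms(1,4) by (metis less_imp_le)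
  have "mu_tilde \<alpha> 1 \<mu> z \<le> ennreal (\<alpha> / pi) * ennreal (2 * K)" for z
    unfolding mu_tilde_def using gauss_integral_half_le[OF assms(1) sets \<sigma> \<open>K \<ge> 0\<close> K]
    by (intro mult_left_mono) auto
  also have "ennreal (\<alpha> / pi) * ennreal (2 * K) = ennreal (\<alpha> / pi * (2 * K))"
    using assms(1) \<open>K \<ge> 0\<close> by (subst ennreal_mult[symmetric]) auto
  finally show ?thesis
    unfolding in_Linf_dA_def using mu_tilde_measurable[OF sets \<sigma>] by blast
qed

section \<open>Lower semicontinuity of the averaging function\<close>

lemma closed_nn_integral_sublevel:
  fixes f :: "'a::first_countable_topology \<Rightarrow> 'b \<Rightarrow> real"
  assumes cont: "\<And>w. continuous_on UNIV (\<lambda>z. f z w)"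
    and meas: "\<And>z. (\<lambda>w. f z w) \<in> borel_measurable M"
  shows "closed {z. (\<integral>\<^sup>+ w. ennreal (f z w) \<partial>M) \<le> c}"
  unfolding closed_sequential_limits
proof (intro allI impI, elim conjE)
  fix x l assume le: "\<forall>n. x n \<in> {z. (\<integral>\<^sup>+ w. ennreal (f z w) \<partial>M) \<le> c}" and "x \<longlonglongrightarrow> l"
  have "(\<lambda>n. f (x n) w) \<longlonglongrightarrow> f l w" for w
    using cont[of w] \<open>x \<longlonglongrightarrow> l\<close> by (rule continuous_on_tendsto_compose) simp_all
  then have "liminf (\<lambda>n. ennreal (f (x n) w)) = ennreal (f l w)" for w
    by (intro lim_imp_Liminf tendsto_ennrealI) simp_all
  then have "(\<integral>\<^sup>+ w. ennreal (f l w) \<partial>M) = (\<integral>\<^sup>+ w. liminf (\<lambda>n. ennreal (f (x n) w)) \<partial>M)"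
    by simp
  also have "\<dots> \<le> liminf (\<lambda>n. \<integral>\<^sup>+ w. ennreal (f (x n) w) \<partial>M)"
    using meas by (intro nn_integral_liminf) simp
  also have "\<dots> \<le> limsup (\<lambda>n. \<integral>\<^sup>+ w. ennreal (f (x n) w) \<partial>M)"
    by (rule Liminf_le_Limsup) simp
  also have "\<dots> \<le> c"
    using le by (intro Limsup_bounded) auto
  finally show "l \<in> {z. (\<integral>\<^sup>+ w. ennreal (f z w) \<partial>M) \<le> c}" by simp
qed

lemma AE_lebesgue_le_imp_le:
  fixes g :: "'a::euclidean_space \<Rightarrow> 'b::linorder"
  assumes "closed {z. g z \<le> c}" and "AE z in lebesgue. g z \<le> c"
  shows "g z \<le> c"
proof (rule ccontr)
  assume "\<not> g z \<le> c"
  obtain N where "N \<in> null_sets lebesgue" and "{z. \<not> g z \<le> c} \<subseteq> N"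
    using assms(2) unfolding eventually_ae_filter by auto
  then have "negligible {z. \<not> g z \<le> c}"
    using negligible_iff_null_sets negligible_subset by blast
  moreover have "open {z. \<not> g z \<le> c}"
    using assms(1) by (simp add: open_closed Collect_neg_eq)
  ultimately show False
    using open_not_negligible \<open>\<not> g z \<le> c\<close> by blast
qed

lemma mu_tilde_Linf_imp_gauss_integral_bounded:
  fixes \<mu> :: "complex measure"
  assumes "\<alpha> > 0" and sets: "sets \<mu> = sets borel" and "in_Linf_dA (mu_tilde \<alpha> 1 \<mu>)"
  obtains M where "M \<ge> 0" "\<And>z. (\<integral>\<^sup>+ w. ennreal (exp (- \<alpha> * (cmod (z - w))\<^sup>2 / 2)) \<partial>\<mu>) \<le> ennreal M"
proof -
  define I where "I z = (\<integral>\<^sup>+ w. ennreal (exp (- \<alpha> * (cmod (z - w))\<^sup>2 / 2)) \<partial>\<mu>)" for z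
  obtain C where "AE z in lebesgue. mu_tilde \<alpha> 1 \<mu> z \<le> ennreal C"
    using assms(3) unfolding in_Linf_dA_def by blast
  then have C: "AE z in lebesgue. mu_tilde \<alpha> 1 \<mu> z \<le> ennreal (max C 0)"
    by eventually_elim (auto intro: order_trans ennreal_leI)
  define M where "M = max C 0 * pi / \<alpha>"
  have "M \<ge> 0" using assms(1) by (simp add: M_def)
  have "mu_tilde \<alpha> 1 \<mu> z \<le> ennreal (max C 0) \<longleftrightarrow> I z \<le> ennreal M" for z
  proof -
    have "ennreal (max C 0) = ennreal (\<alpha> / pi) * ennreal M"
      using assms(1) by (simp add: M_def flip: ennreal_mult)
    then show ?thesis
      unfolding mu_tilde_def I_def using assms(1) by (simp add: ennreal_mult_le_mult_iff)
  qed
  then have "AE z in lebesgue. I z \<le> ennreal M"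
    using C by simp
  moreover have "closed {z. I z \<le> ennreal M}"
    unfolding I_def
  proof (rule closed_nn_integral_sublevel)
    show "continuous_on UNIV (\<lambda>z. exp (- \<alpha> * (cmod (z - w))\<^sup>2 / 2))" for w
      by (intro continuous_intros) simp
    show "(\<lambda>w. exp (- \<alpha> * (cmod (z - w))\<^sup>2 / 2)) \<in> borel_measurable \<mu>" for z
      unfolding measurable_cong_sets[OF sets refl] by measurable
  qed
  ultimately show ?thesis
    using that[OF \<open>M \<ge> 0\<close>] AE_lebesgue_le_imp_le[of I] unfolding I_def by blast
qed

section \<open>Differentiation under the integral sign\<close>

lemma norm_exp_sub_one_sub_le:
  fixes u :: complex
  shows "norm (exp u - 1 - u) \<le> (norm u)\<^sup>2 * exp (norm u)"
proof -
  have tail: "(\<lambda>k. u ^ (k + 2) /\<^sub>R fact (k + 2)) sums (exp u - 1 - u)"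
    using sums_split_initial_segment[OF exp_converges[of u], of 2] by (simp add: eval_nat_numeral diff_diff_eq)
  have majorant: "(\<lambda>k. (norm u)\<^sup>2 * ((norm u) ^ k /\<^sub>R fact k)) sums ((norm u)\<^sup>2 * exp (norm u))"
    by (intro sums_mult exp_converges)
  have "norm (u ^ (k + 2) /\<^sub>R fact (k + 2)) \<le> (norm u)\<^sup>2 * ((norm u) ^ k /\<^sub>R fact k)" for k
  proof -
    have "(fact k :: real) \<le> fact (k + 2)" by (intro fact_mono) auto
    then have "(norm u) ^ (k + 2) / fact (k + 2) \<le> (norm u) ^ (k + 2) / (fact k :: real)"
      by (intro divide_left_mono) auto
    then show ?thesis
      by (simp add: norm_mult norm_power power_add power2_eq_square divide_inverse mult_ac del: fact_Suc)
  qed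
  then have "norm (\<Sum>k. u ^ (k + 2) /\<^sub>R fact (k + 2)) \<le> (\<Sum>k. (norm u)\<^sup>2 * ((norm u) ^ k /\<^sub>R fact k))"
    using majorant by (intro norm_suminf_le) (auto simp: sums_iff)
  then show ?thesis
    using tail majorant by (simp add: sums_iff)
qed

lemma exp_norm_le_sum_exp_coords:
  fixes v :: complex
  assumes "\<beta> \<ge> 0"
  shows "exp (\<beta> * cmod v) \<le>
           exp (2 * \<beta> * Re v) + exp (- (2 * \<beta> * Re v)) + exp (2 * \<beta> * Im v) + exp (- (2 * \<beta> * Im v))"
proof -
  have abs: "exp (2 * \<beta> * \<bar>x\<bar>) \<le> exp (2 * \<beta> * x) + exp (- (2 * \<beta> * x))" for x :: real
    by (cases "x \<ge> 0") (simp_all add: add_increasing add_increasing2 less_imp_le)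
  have "\<beta> * cmod v \<le> \<beta> * (\<bar>Re v\<bar> + \<bar>Im v\<bar>)"
    using cmod_le assms by (rule mult_left_mono)
  also have "\<dots> \<le> \<beta> * (2 * max \<bar>Re v\<bar> \<bar>Im v\<bar>)"
    using assms by (intro mult_left_mono) auto
  finally have "exp (\<beta> * cmod v) \<le> exp (2 * \<beta> * \<bar>Re v\<bar>) \<or> exp (\<beta> * cmod v) \<le> exp (2 * \<beta> * \<bar>Im v\<bar>)"
    by (simp add: max_def split: if_splits)
  then show ?thesis
    using abs[of "Re v"] abs[of "Im v"] by (smt (verit) exp_gt_zero)
qed

lemma exp_weight_gauss_le_translates:
  assumes "\<alpha> > 0" and "\<beta> \<ge> 0"
  defines "r \<equiv> complex_of_real (2 * \<beta> / \<alpha>)"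
  shows "exp (\<beta> * cmod v) * exp (- \<alpha> * (cmod v)\<^sup>2 / 2) \<le> exp (2 * \<beta>\<^sup>2 / \<alpha>) *
     (exp (- \<alpha> * (cmod (r - v))\<^sup>2 / 2) + exp (- \<alpha> * (cmod (- r - v))\<^sup>2 / 2) +
      exp (- \<alpha> * (cmod (\<i> * r - v))\<^sup>2 / 2) + exp (- \<alpha> * (cmod (- (\<i> * r) - v))\<^sup>2 / 2))"
proof -
  have translate: "exp (2 * \<beta>\<^sup>2 / \<alpha>) * exp (- \<alpha> * (cmod (q - v))\<^sup>2 / 2)
      = exp (\<alpha> * (q \<bullet> v)) * exp (- \<alpha> * (cmod v)\<^sup>2 / 2)" if "cmod q = 2 * \<beta> / \<alpha>" for q
  proof -
    have "exp (2 * \<beta>\<^sup>2 / \<alpha>) * exp (- \<alpha> * (cmod q)\<^sup>2 / 2) = 1"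
      using assms(1) unfolding that by (simp add: power2_eq_square field_simps flip: exp_add)
    then show ?thesis
      unfolding exp_gauss_expand[of \<alpha> q v] by (simp only: mult.assoc[symmetric])
  qed
  have "\<alpha> * (r \<bullet> v) = 2 * \<beta> * Re v" "\<alpha> * ((- r) \<bullet> v) = - (2 * \<beta> * Re v)"
    "\<alpha> * ((\<i> * r) \<bullet> v) = 2 * \<beta> * Im v" "\<alpha> * ((- (\<i> * r)) \<bullet> v) = - (2 * \<beta> * Im v)"
    using assms(1) by (simp_all add: r_def inner_complex_def)
  moreover have "cmod r = 2 * \<beta> / \<alpha>" "cmod (- r) = 2 * \<beta> / \<alpha>"
    "cmod (\<i> * r) = 2 * \<beta> / \<alpha>" "cmod (- (\<i> * r)) = 2 * \<beta> / \<alpha>"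
    using assms by (simp_all add: r_def norm_mult norm_divide)
  ultimately have "exp (2 * \<beta>\<^sup>2 / \<alpha>) *
     (exp (- \<alpha> * (cmod (r - v))\<^sup>2 / 2) + exp (- \<alpha> * (cmod (- r - v))\<^sup>2 / 2) +
      exp (- \<alpha> * (cmod (\<i> * r - v))\<^sup>2 / 2) + exp (- \<alpha> * (cmod (- (\<i> * r) - v))\<^sup>2 / 2))
    = (exp (2 * \<beta> * Re v) + exp (- (2 * \<beta> * Re v)) + exp (2 * \<beta> * Im v) + exp (- (2 * \<beta> * Im v)))
      * exp (- \<alpha> * (cmod v)\<^sup>2 / 2)"
    by (simp only: distrib_left distrib_right translate)
  moreover have "exp (\<beta> * cmod v) * exp (- \<alpha> * (cmod v)\<^sup>2 / 2) \<le>
      (exp (2 * \<beta> * Re v) + exp (- (2 * \<beta> * Re v)) + exp (2 * \<beta> * Im v) + exp (- (2 * \<beta> * Im v)))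
      * exp (- \<alpha> * (cmod v)\<^sup>2 / 2)"
    by (intro mult_right_mono exp_norm_le_sum_exp_coords assms(2)) simp
  ultimately show ?thesis by simp
qed

lemma has_field_derivative_if_quadratic_remainder:
  fixes F :: "complex \<Rightarrow> complex"
  assumes "\<And>z. cmod (z - z0) \<le> 1 \<Longrightarrow> norm (F z - F z0 - (z - z0) * D) \<le> K * (cmod (z - z0))\<^sup>2"
  shows "(F has_field_derivative D) (at z0)"
proof -
  have "eventually (\<lambda>z. norm ((F z - F z0) / (z - z0) - D) \<le> K * cmod (z - z0)) (at z0)"
    unfolding eventually_at
  proof (intro exI[of _ 1] conjI ballI impI)
    fix z assume z: "z \<noteq> z0 \<and> dist z z0 < 1"
    then have "norm ((F z - F z0) / (z - z0) - D) = norm (F z - F z0 - (z - z0) * D) / cmod (z - z0)"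
      by (simp add: norm_divide field_simps)
    also have "\<dots> \<le> K * (cmod (z - z0))\<^sup>2 / cmod (z - z0)"
      using z assms[of z] by (intro divide_right_mono) (auto simp: dist_norm)
    finally show "norm ((F z - F z0) / (z - z0) - D) \<le> K * cmod (z - z0)"
      using z by (simp add: power2_eq_square)
  qed simp
  moreover have "((\<lambda>z. K * cmod (z - z0)) \<longlongrightarrow> 0) (at z0)"
    by (auto intro!: tendsto_eq_intros)
  ultimately have "((\<lambda>z. (F z - F z0) / (z - z0) - D) \<longlongrightarrow> 0) (at z0)"
    by (rule Lim_null_comparison)
  then show ?thesis
    by (simp add: has_field_derivative_iff LIM_zero_iff)
qed

lemma has_field_derivative_integral_quadratic_remainder:
  fixes F :: "complex \<Rightarrow> 'a \<Rightarrow> complex"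
  assumes "\<And>z. integrable M (F z)" and "integrable M D" and "integrable M B"
    and remainder: "\<And>z w. cmod (z - z0) \<le> 1 \<Longrightarrow>
      norm (F z w - F z0 w - (z - z0) * D w) \<le> (cmod (z - z0))\<^sup>2 * B w"
  shows "((\<lambda>z. \<integral>w. F z w \<partial>M) has_field_derivative (\<integral>w. D w \<partial>M)) (at z0)"
proof (rule has_field_derivative_if_quadratic_remainder)
  fix z assume "cmod (z - z0) \<le> 1"
  have int: "integrable M (\<lambda>w. F z w - F z0 w - (z - z0) * D w)"
    by (intro Bochner_Integration.integrable_diff integrable_mult_right assms(1,2))
  have "(\<integral>w. F z w \<partial>M) - (\<integral>w. F z0 w \<partial>M) - (z - z0) * (\<integral>w. D w \<partial>M)
      = (\<integral>w. F z w - F z0 w - (z - z0) * D w \<partial>M)"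
    using assms(1,2) by simp
  then have "norm ((\<integral>w. F z w \<partial>M) - (\<integral>w. F z0 w \<partial>M) - (z - z0) * (\<integral>w. D w \<partial>M))
      \<le> (\<integral>w. norm (F z w - F z0 w - (z - z0) * D w) \<partial>M)"
    by (simp only: integral_norm_bound)
  also have "\<dots> \<le> (\<integral>w. (cmod (z - z0))\<^sup>2 * B w \<partial>M)"
    using int assms(3) remainder[OF \<open>cmod (z - z0) \<le> 1\<close>]
    by (intro integral_mono integrable_norm integrable_mult_right)
  also have "\<dots> = (\<integral>w. B w \<partial>M) * (cmod (z - z0))\<^sup>2"
    by (simp add: mult.commute)
  finally show "norm ((\<integral>w. F z w \<partial>M) - (\<integral>w. F z0 w \<partial>M) - (z - z0) * (\<integral>w. D w \<partial>M))
      \<le> (\<integral>w. B w \<partial>M) * (cmod (z - z0))\<^sup>2" .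
qed

lemma toeplitz_integrand_measurable:
  assumes "sets \<mu> = sets borel" and "f \<in> borel_measurable borel"
  shows "toeplitz_integrand \<alpha> f z \<in> borel_measurable \<mu>"
proof -
  have "continuous_on UNIV (\<lambda>w. cnj (fock_kernel \<alpha> z w) * of_real (exp (- \<alpha> * (cmod w)\<^sup>2)))"
    unfolding fock_kernel_def by (intro continuous_intros)
  then have [measurable]: "(\<lambda>w. cnj (fock_kernel \<alpha> z w) * of_real (exp (- \<alpha> * (cmod w)\<^sup>2))) \<in> borel_measurable borel"
    by (rule borel_measurable_continuous_onI)
  show ?thesis
    using assms(2) unfolding measurable_cong_sets[OF assms(1) refl] toeplitz_integrand_def mult.assoc
    by measurable
qed

lemma toeplitz_integrand_remainder_le:
  assumes "\<alpha> \<ge> 0" and N: "norm (f w) * exp (- \<alpha> * (cmod w)\<^sup>2 / 2) \<le> N" and "cmod (z - z0) \<le> 1"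
  shows "norm (toeplitz_integrand \<alpha> f z w - toeplitz_integrand \<alpha> f z0 w
             - (z - z0) * (toeplitz_integrand \<alpha> f z0 w * (\<alpha> * cnj w)))
         \<le> (cmod (z - z0))\<^sup>2 * (2 * \<alpha>\<^sup>2 * N * exp (\<alpha> * (cmod z0)\<^sup>2 / 2) *
              (exp ((\<alpha> + 1) * cmod w) * exp (- \<alpha> * (cmod (z0 - w))\<^sup>2 / 2)))"
proof -
  define u where "u = \<alpha> * (z - z0) * cnj w"
  define T0 where "T0 = toeplitz_integrand \<alpha> f z0 w"
  have "N \<ge> 0"
    by (rule weighted_norm_bound_nonneg[where f = f, OF N])
  have "toeplitz_integrand \<alpha> f z w = T0 * exp u"
    unfolding T0_def u_def toeplitz_integrand_def fock_kernel_def exp_cnj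
    by (simp add: algebra_simps flip: exp_add)
  then have eq: "toeplitz_integrand \<alpha> f z w - T0 - (z - z0) * (T0 * (\<alpha> * cnj w)) = T0 * (exp u - 1 - u)"
    by (simp add: u_def algebra_simps)
  have norm_u: "cmod u = \<alpha> * cmod (z - z0) * cmod w"
    using assms(1) by (simp add: u_def norm_mult)
  have "\<alpha> * cmod (z - z0) \<le> \<alpha>"
    using assms(1,3) by (simp add: mult_left_le)
  then have "exp (cmod u) \<le> exp (\<alpha> * cmod w)"
    unfolding norm_u by (simp add: mult_right_mono)
  then have "norm (exp u - 1 - u) \<le> (cmod u)\<^sup>2 * exp (\<alpha> * cmod w)"
    using norm_exp_sub_one_sub_le[of u] by (meson mult_left_mono order_trans zero_le_power2)
  also have "\<dots> = (cmod (z - z0))\<^sup>2 * (\<alpha>\<^sup>2 * ((cmod w)\<^sup>2 * exp (\<alpha> * cmod w)))"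
    unfolding norm_u by (simp add: power_mult_distrib)
  also have "\<dots> \<le> (cmod (z - z0))\<^sup>2 * (\<alpha>\<^sup>2 * (2 * exp ((\<alpha> + 1) * cmod w)))"
  proof -
    have "(cmod w)\<^sup>2 \<le> 2 * exp (cmod w)"
      using exp_lower_Taylor_quadratic[of "cmod w"] norm_ge_zero[of w] by linarith
    then have "(cmod w)\<^sup>2 * exp (\<alpha> * cmod w) \<le> 2 * exp ((\<alpha> + 1) * cmod w)"
      by (simp add: algebra_simps exp_add mult_right_mono)
    then show ?thesis by (intro mult_left_mono) simp_all
  qed
  finally have "norm (T0 * (exp u - 1 - u)) \<le>
      (N * exp (\<alpha> * (cmod z0)\<^sup>2 / 2) * exp (- \<alpha> * (cmod (z0 - w))\<^sup>2 / 2)) *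
      ((cmod (z - z0))\<^sup>2 * (\<alpha>\<^sup>2 * (2 * exp ((\<alpha> + 1) * cmod w))))"
    unfolding norm_mult T0_def
    using \<open>N \<ge> 0\<close> by (intro mult_mono norm_toeplitz_integrand_le[where f = f and w = w, OF N]) auto
  then show ?thesis
    unfolding T0_def[symmetric] eq by (simp add: mult_ac)
qed

section \<open>Boundedness of the Toeplitz operator\<close>

context
  fixes \<alpha> :: real and \<mu> :: "complex measure" and M :: real
  assumes alpha_pos: "\<alpha> > 0" and sets_mu: "sets \<mu> = sets borel" and M_nonneg: "M \<ge> 0"
    and gauss_integral_bounded: "\<And>p. (\<integral>\<^sup>+ w. ennreal (exp (- \<alpha> * (cmod (p - w))\<^sup>2 / 2)) \<partial>\<mu>) \<le> ennreal M"
begin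

lemma borel_measurable_mu: "borel_measurable \<mu> = borel_measurable borel"
  by (rule measurable_cong_sets[OF sets_mu refl])

lemma nn_integral_exp_weight_gauss_le:
  assumes "\<beta> \<ge> 0"
  shows "(\<integral>\<^sup>+ w. ennreal (exp (\<beta> * cmod (w - z)) * exp (- \<alpha> * (cmod (z - w))\<^sup>2 / 2)) \<partial>\<mu>)
           \<le> ennreal (4 * exp (2 * \<beta>\<^sup>2 / \<alpha>) * M)"
proof -
  define r where "r = complex_of_real (2 * \<beta> / \<alpha>)"
  define E where "E p w = ennreal (exp (- \<alpha> * (cmod (p - w))\<^sup>2 / 2))" for p w
  have [measurable]: "E p \<in> borel_measurable \<mu>" for p
    unfolding borel_measurable_mu E_def by measurable
  have "(\<integral>\<^sup>+ w. ennreal (exp (\<beta> * cmod (w - z)) * exp (- \<alpha> * (cmod (z - w))\<^sup>2 / 2)) \<partial>\<mu>)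
      \<le> (\<integral>\<^sup>+ w. ennreal (exp (2 * \<beta>\<^sup>2 / \<alpha>)) *
           (E (z + r) w + E (z - r) w + E (z + \<i> * r) w + E (z - \<i> * r) w) \<partial>\<mu>)"
  proof (intro nn_integral_mono)
    fix w
    have "exp (\<beta> * cmod (w - z)) * exp (- \<alpha> * (cmod (z - w))\<^sup>2 / 2) \<le> exp (2 * \<beta>\<^sup>2 / \<alpha>) *
        (exp (- \<alpha> * (cmod (z + r - w))\<^sup>2 / 2) + exp (- \<alpha> * (cmod (z - r - w))\<^sup>2 / 2) +
         exp (- \<alpha> * (cmod (z + \<i> * r - w))\<^sup>2 / 2) + exp (- \<alpha> * (cmod (z - \<i> * r - w))\<^sup>2 / 2))"
      using exp_weight_gauss_le_translates[OF alpha_pos assms, of "w - z"]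
      by (simp add: r_def norm_minus_commute algebra_simps)
    then show "ennreal (exp (\<beta> * cmod (w - z)) * exp (- \<alpha> * (cmod (z - w))\<^sup>2 / 2))
        \<le> ennreal (exp (2 * \<beta>\<^sup>2 / \<alpha>)) * (E (z + r) w + E (z - r) w + E (z + \<i> * r) w + E (z - \<i> * r) w)"
      unfolding E_def by (simp add: ennreal_mult[symmetric] ennreal_plus[symmetric] del: ennreal_plus)
  qed
  also have "\<dots> = ennreal (exp (2 * \<beta>\<^sup>2 / \<alpha>)) * ((\<integral>\<^sup>+ w. E (z + r) w \<partial>\<mu>) + (\<integral>\<^sup>+ w. E (z - r) w \<partial>\<mu>)
      + (\<integral>\<^sup>+ w. E (z + \<i> * r) w \<partial>\<mu>) + (\<integral>\<^sup>+ w. E (z - \<i> * r) w \<partial>\<mu>))"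
    by (simp add: nn_integral_cmult nn_integral_add)
  also have "\<dots> \<le> ennreal (exp (2 * \<beta>\<^sup>2 / \<alpha>)) * (ennreal M + ennreal M + ennreal M + ennreal M)"
    unfolding E_def by (intro mult_left_mono add_mono gauss_integral_bounded) simp
  also have "\<dots> = ennreal (4 * exp (2 * \<beta>\<^sup>2 / \<alpha>) * M)"
    using M_nonneg by (simp add: ennreal_mult[symmetric] ennreal_plus[symmetric] del: ennreal_plus)
  finally show ?thesis .
qed

lemma integrable_exp_norm_gauss:
  assumes "\<beta> \<ge> 0"
  shows "integrable \<mu> (\<lambda>w. exp (\<beta> * cmod w) * exp (- \<alpha> * (cmod (z - w))\<^sup>2 / 2))"
proof (rule integrableI_bounded)
  show "(\<lambda>w. exp (\<beta> * cmod w) * exp (- \<alpha> * (cmod (z - w))\<^sup>2 / 2)) \<in> borel_measurable \<mu>"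
    unfolding borel_measurable_mu by measurable
  have "(\<integral>\<^sup>+ w. ennreal (norm (exp (\<beta> * cmod w) * exp (- \<alpha> * (cmod (z - w))\<^sup>2 / 2))) \<partial>\<mu>)
      \<le> (\<integral>\<^sup>+ w. ennreal (exp (\<beta> * cmod z)) *
            ennreal (exp (\<beta> * cmod (w - z)) * exp (- \<alpha> * (cmod (z - w))\<^sup>2 / 2)) \<partial>\<mu>)"
  proof (intro nn_integral_mono)
    fix w
    have "\<beta> * cmod w \<le> \<beta> * cmod z + \<beta> * cmod (w - z)"
      using norm_triangle_ineq[of z "w - z"] assms by (simp add: mult_left_mono flip: distrib_left)
    then have "exp (\<beta> * cmod w) \<le> exp (\<beta> * cmod z) * exp (\<beta> * cmod (w - z))"
      by (simp flip: exp_add)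
    then show "ennreal (norm (exp (\<beta> * cmod w) * exp (- \<alpha> * (cmod (z - w))\<^sup>2 / 2)))
        \<le> ennreal (exp (\<beta> * cmod z)) * ennreal (exp (\<beta> * cmod (w - z)) * exp (- \<alpha> * (cmod (z - w))\<^sup>2 / 2))"
      by (simp add: mult_right_mono mult.assoc flip: ennreal_mult)
  qed
  also have "\<dots> = ennreal (exp (\<beta> * cmod z)) *
      (\<integral>\<^sup>+ w. ennreal (exp (\<beta> * cmod (w - z)) * exp (- \<alpha> * (cmod (z - w))\<^sup>2 / 2)) \<partial>\<mu>)"
    by (rule nn_integral_cmult) (simp add: borel_measurable_mu)
  also have "\<dots> \<le> ennreal (exp (\<beta> * cmod z)) * ennreal (4 * exp (2 * \<beta>\<^sup>2 / \<alpha>) * M)"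
    by (intro mult_left_mono nn_integral_exp_weight_gauss_le assms) simp
  also have "\<dots> < \<infinity>"
    by (simp add: ennreal_mult_less_top)
  finally show "(\<integral>\<^sup>+ w. ennreal (norm (exp (\<beta> * cmod w) * exp (- \<alpha> * (cmod (z - w))\<^sup>2 / 2))) \<partial>\<mu>) < \<infinity>" .
qed

lemma integrable_toeplitz_integrand:
  assumes "f \<in> borel_measurable borel" and N: "\<And>w. norm (f w) * exp (- \<alpha> * (cmod w)\<^sup>2 / 2) \<le> N"
  shows "integrable \<mu> (toeplitz_integrand \<alpha> f z)"
proof (rule Bochner_Integration.integrable_bound)
  show "integrable \<mu> (\<lambda>w. N * exp (\<alpha> * (cmod z)\<^sup>2 / 2) * (exp (0 * cmod w) * exp (- \<alpha> * (cmod (z - w))\<^sup>2 / 2)))"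
    by (intro integrable_mult_right integrable_exp_norm_gauss) simp
  show "toeplitz_integrand \<alpha> f z \<in> borel_measurable \<mu>"
    by (rule toeplitz_integrand_measurable[OF sets_mu assms(1)])
  have "N \<ge> 0"
    by (rule weighted_norm_bound_nonneg[where f = f, OF N[of 0]])
  then show "AE w in \<mu>. norm (toeplitz_integrand \<alpha> f z w)
      \<le> norm (N * exp (\<alpha> * (cmod z)\<^sup>2 / 2) * (exp (0 * cmod w) * exp (- \<alpha> * (cmod (z - w))\<^sup>2 / 2)))"
    using norm_toeplitz_integrand_le[where f = f, OF N] by (simp add: abs_mult)
qed

lemma norm_toeplitz_le:
  assumes "f \<in> borel_measurable borel" and N: "\<And>w. norm (f w) * exp (- \<alpha> * (cmod w)\<^sup>2 / 2) \<le> N"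
  shows "norm (toeplitz \<alpha> \<mu> f z) * exp (- \<alpha> * (cmod z)\<^sup>2 / 2) \<le> N * M"
proof -
  have "N \<ge> 0"
    by (rule weighted_norm_bound_nonneg[where f = f, OF N[of 0]])
  have "ennreal (norm (toeplitz \<alpha> \<mu> f z)) \<le> (\<integral>\<^sup>+ w. ennreal (norm (toeplitz_integrand \<alpha> f z w)) \<partial>\<mu>)"
    unfolding toeplitz_def by (rule integral_norm_bound_ennreal[OF integrable_toeplitz_integrand[OF assms]])
  also have "\<dots> \<le> (\<integral>\<^sup>+ w. ennreal (N * exp (\<alpha> * (cmod z)\<^sup>2 / 2)) * ennreal (exp (- \<alpha> * (cmod (z - w))\<^sup>2 / 2)) \<partial>\<mu>)"
    using norm_toeplitz_integrand_le[where f = f, OF N] \<open>N \<ge> 0\<close>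
    by (intro nn_integral_mono) (simp flip: ennreal_mult)
  also have "\<dots> = ennreal (N * exp (\<alpha> * (cmod z)\<^sup>2 / 2)) * (\<integral>\<^sup>+ w. ennreal (exp (- \<alpha> * (cmod (z - w))\<^sup>2 / 2)) \<partial>\<mu>)"
    by (rule nn_integral_cmult) (simp add: borel_measurable_mu)
  also have "\<dots> \<le> ennreal (N * exp (\<alpha> * (cmod z)\<^sup>2 / 2)) * ennreal M"
    by (intro mult_left_mono gauss_integral_bounded) simp
  finally have "norm (toeplitz \<alpha> \<mu> f z) \<le> N * M * exp (\<alpha> * (cmod z)\<^sup>2 / 2)"
    using \<open>N \<ge> 0\<close> M_nonneg by (simp add: mult_ac flip: ennreal_mult)
  then have "norm (toeplitz \<alpha> \<mu> f z) * exp (- \<alpha> * (cmod z)\<^sup>2 / 2)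
      \<le> N * M * (exp (\<alpha> * (cmod z)\<^sup>2 / 2) * exp (- \<alpha> * (cmod z)\<^sup>2 / 2))"
    by (simp add: mult_right_mono mult.assoc)
  then show ?thesis by (simp flip: exp_add)
qed

lemma integrable_toeplitz_integrand_derivative:
  assumes "f \<in> borel_measurable borel" and N: "\<And>w. norm (f w) * exp (- \<alpha> * (cmod w)\<^sup>2 / 2) \<le> N"
  shows "integrable \<mu> (\<lambda>w. toeplitz_integrand \<alpha> f z w * (\<alpha> * cnj w))"
proof (rule Bochner_Integration.integrable_bound)
  show "integrable \<mu> (\<lambda>w. \<alpha> * N * exp (\<alpha> * (cmod z)\<^sup>2 / 2) * (exp (1 * cmod w) * exp (- \<alpha> * (cmod (z - w))\<^sup>2 / 2)))"
    by (intro integrable_mult_right integrable_exp_norm_gauss) simp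
  have [measurable]: "(\<lambda>w. \<alpha> * cnj w) \<in> borel_measurable borel"
    by (intro borel_measurable_continuous_onI continuous_intros)
  show "(\<lambda>w. toeplitz_integrand \<alpha> f z w * (\<alpha> * cnj w)) \<in> borel_measurable \<mu>"
    using toeplitz_integrand_measurable[OF sets_mu assms(1)] unfolding borel_measurable_mu
    by measurable
  have "N \<ge> 0"
    by (rule weighted_norm_bound_nonneg[where f = f, OF N[of 0]])
  show "AE w in \<mu>. norm (toeplitz_integrand \<alpha> f z w * (\<alpha> * cnj w))
      \<le> norm (\<alpha> * N * exp (\<alpha> * (cmod z)\<^sup>2 / 2) * (exp (1 * cmod w) * exp (- \<alpha> * (cmod (z - w))\<^sup>2 / 2)))"
  proof (rule AE_I2)
    fix w
    have "cmod w \<le> exp (cmod w)"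
      using exp_ge_add_one_self[of "cmod w"] by linarith
    then have "norm (toeplitz_integrand \<alpha> f z w) * (\<alpha> * cmod w)
        \<le> (N * exp (\<alpha> * (cmod z)\<^sup>2 / 2) * exp (- \<alpha> * (cmod (z - w))\<^sup>2 / 2)) * (\<alpha> * exp (cmod w))"
      using alpha_pos \<open>N \<ge> 0\<close>
      by (intro mult_mono norm_toeplitz_integrand_le[where f = f and w = w, OF N[of w]]) auto
    then show "norm (toeplitz_integrand \<alpha> f z w * (\<alpha> * cnj w))
        \<le> norm (\<alpha> * N * exp (\<alpha> * (cmod z)\<^sup>2 / 2) * (exp (1 * cmod w) * exp (- \<alpha> * (cmod (z - w))\<^sup>2 / 2)))"
      using alpha_pos \<open>N \<ge> 0\<close> by (simp add: norm_mult abs_mult mult_ac)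
  qed
qed

lemma toeplitz_holomorphic:
  assumes "f \<in> borel_measurable borel" and N: "\<And>w. norm (f w) * exp (- \<alpha> * (cmod w)\<^sup>2 / 2) \<le> N"
  shows "toeplitz \<alpha> \<mu> f holomorphic_on UNIV"
proof -
  have "(toeplitz \<alpha> \<mu> f has_field_derivative (\<integral>w. toeplitz_integrand \<alpha> f z0 w * (\<alpha> * cnj w) \<partial>\<mu>)) (at z0)"
    for z0
    unfolding toeplitz_def[abs_def]
  proof (rule has_field_derivative_integral_quadratic_remainder)
    show "integrable \<mu> (toeplitz_integrand \<alpha> f z)" for z
      by (rule integrable_toeplitz_integrand[OF assms])
    show "integrable \<mu> (\<lambda>w. toeplitz_integrand \<alpha> f z0 w * (\<alpha> * cnj w))"
      by (rule integrable_toeplitz_integrand_derivative[OF assms])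
    show "integrable \<mu> (\<lambda>w. 2 * \<alpha>\<^sup>2 * N * exp (\<alpha> * (cmod z0)\<^sup>2 / 2) *
        (exp ((\<alpha> + 1) * cmod w) * exp (- \<alpha> * (cmod (z0 - w))\<^sup>2 / 2)))"
      using alpha_pos by (intro integrable_mult_right integrable_exp_norm_gauss) simp
    show "norm (toeplitz_integrand \<alpha> f z w - toeplitz_integrand \<alpha> f z0 w
             - (z - z0) * (toeplitz_integrand \<alpha> f z0 w * (\<alpha> * cnj w)))
         \<le> (cmod (z - z0))\<^sup>2 * (2 * \<alpha>\<^sup>2 * N * exp (\<alpha> * (cmod z0)\<^sup>2 / 2) *
              (exp ((\<alpha> + 1) * cmod w) * exp (- \<alpha> * (cmod (z0 - w))\<^sup>2 / 2)))"
      if "cmod (z - z0) \<le> 1" for z w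
      using alpha_pos by (intro toeplitz_integrand_remainder_le N that) simp
  qed
  then show ?thesis
    unfolding holomorphic_on_def field_differentiable_def by (meson has_field_derivative_at_within)
qed

lemma toeplitz_bounded_if_gauss_integral_bounded: "toeplitz_bounded_fock_inf \<alpha> \<mu>"
  unfolding toeplitz_bounded_fock_inf_def
proof (intro exI[of _ M] ballI conjI allI)
  fix f assume f: "f \<in> fock_inf \<alpha>"
  then have meas: "f \<in> borel_measurable borel"
    unfolding fock_inf_def by (auto intro: borel_measurable_continuous_onI holomorphic_on_imp_continuous_on)
  note N = norm_le_fock_inf_norm[OF f]
  show "integrable \<mu> (toeplitz_integrand \<alpha> f z)" for z
    by (rule integrable_toeplitz_integrand[OF meas N])
  have bound: "norm (toeplitz \<alpha> \<mu> f z) * exp (- \<alpha> * (norm z)\<^sup>2 / 2) \<le> fock_inf_norm \<alpha> f * M" for z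
    by (rule norm_toeplitz_le[OF meas N])
  show "toeplitz \<alpha> \<mu> f \<in> fock_inf \<alpha>"
    unfolding fock_inf_def using toeplitz_holomorphic[OF meas N] bound by blast
  show "fock_inf_norm \<alpha> (toeplitz \<alpha> \<mu> f) \<le> M * fock_inf_norm \<alpha> f"
    using fock_inf_norm_le[OF bound] by (simp add: mult.commute)
qed

end

theorem theorem4p1:
  fixes \<alpha> :: real and \<mu> :: "complex measure"
  assumes "\<alpha> > 0"
    and "sets \<mu> = sets borel"
    and "condition_M \<alpha> \<mu>"
  shows "toeplitz_bounded_fock_inf \<alpha> \<mu> \<longleftrightarrow> in_Linf_dA (mu_tilde \<alpha> 1 \<mu>)"
proof
  assume "toeplitz_bounded_fock_inf \<alpha> \<mu>"
  then show "in_Linf_dA (mu_tilde \<alpha> 1 \<mu>)"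
    using toeplitz_bounded_imp_mu_tilde_Linf assms by blast
next
  assume "in_Linf_dA (mu_tilde \<alpha> 1 \<mu>)"
  then obtain M where "M \<ge> 0"
    and "\<And>z. (\<integral>\<^sup>+ w. ennreal (exp (- \<alpha> * (cmod (z - w))\<^sup>2 / 2)) \<partial>\<mu>) \<le> ennreal M"
    using mu_tilde_Linf_imp_gauss_integral_bounded assms(1,2) by blast
  then show "toeplitz_bounded_fock_inf \<alpha> \<mu>"
    by (rule toeplitz_bounded_if_gauss_integral_bounded[OF assms(1,2)])
qed

end
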